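(* In the 1SDI setting where Alice measures $A_0=\sigma_x$, $A_1=\sigma_y$, Bob measures $B_0=(\sigma_x-\sigma_y)/\sqrt2$, $B_1=(\sigma_x+\sigma_y)/\sqrt2$, and Charlie is a black box, the Svetlichny family $P^V_{SvF}$ ($0<V\le1$) demonstrates genuine tripartite steering (i.e. admits no 1SDI steering LHS-LHV model) if and only if $V>\frac1{\sqrt2}$.
   Context: Outcomes and settings: $a,b,c,x,y,z\in\{0,1\}$. For a qubit observable $O$ with eigenvalues $\pm1$, the measurement has projectors $M_0=(\mathbb 1+O)/2$, $M_1=(\mathbb 1-O)/2$; $M^A_{a|x}$, $M^B_{b|y}$ denote the projectors of $A_x$, $B_y$. Svetlichny family: $P^V_{SvF}(abc|xyz)=\frac{2+(-1)^{a\oplus b\oplus c\oplus xy\oplus yz\oplus xz}\sqrt2\,V}{16}$. 1SDI steering LHS-LHV (StLHS) model: $P(abc|xyz)=\sum_\lambda r_\lambda \mathrm{Tr}[(M^A_{a|x}\otimes M^B_{b|y})\rho^\lambda_{AB}]P_\lambda(c|z)+\sum_\lambda p_\lambda \mathrm{Tr}(M^A_{a|x}\rho^\lambda_A)P^Q_\lambda(bc|yz)+\sum_\lambda q_\lambda \mathrm{Tr}(M^B_{b|y}\rho^\lambda_B)P^Q_\lambda(ac|xz)$, with nonnegative weights summing to 1, $\rho^\lambda_{AB}$ two-qubit states, $\rho^\lambda_A,\rho^\lambda_B$ qubit states, $P_\lambda(c|z)$ arbitrary conditional distributions, and $P^Q_\lambda(bc|yz)=\mathrm{Tr}[(M^B_{b|y}\otimes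 N^\lambda_{c|z})\tau^\lambda_{BC}]$, $P^Q_\lambda(ac|xz)=\mathrm{Tr}[(M^A_{a|x}\otimes N^\lambda_{c|z})\tau^\lambda_{AC}]$ for some states $\tau^\lambda$ on $\mathbb C^2\otimes\mathbb C^d$ and POVMs $\{N^\lambda_{c|z}\}_c$ on $\mathbb C^d$. A correlation demonstrates genuine tripartite steering in the 1SDI scenario iff it admits no StLHS model. *)

theory Defs
  imports Complex_Main
begin

text \<open>Finite-dimensional complex matrices are represented as functions
  nat => nat => complex; the dimension n is passed explicitly and only
  the entries with indices below n matter.\<close>

type_synonym cmat = "nat \<Rightarrow> nat \<Rightarrow> complex"

definition idm :: cmat where
  "idm i j = (if i = j then 1 else 0)"

definition mmul :: "nat \<Rightarrow> cmat \<Rightarrow> cmat \<Rightarrow> cmat" where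
  "mmul n A B i j = (\<Sum>k<n. A i k * B k j)"

definition mtrace :: "nat \<Rightarrow> cmat \<Rightarrow> complex" where
  "mtrace n A = (\<Sum>i<n. A i i)"

text \<open>Kronecker product of an m x m matrix A with an n x n matrix B
  (an (m*n) x (m*n) matrix; index i of the product corresponds to the pair
  (i div n, i mod n)).\<close>
definition kron :: "nat \<Rightarrow> cmat \<Rightarrow> cmat \<Rightarrow> cmat" where
  "kron n A B i j = A (i div n) (j div n) * B (i mod n) (j mod n)"

definition psd :: "nat \<Rightarrow> cmat \<Rightarrow> bool" where
  "psd n A \<longleftrightarrow> (\<forall>v :: nat \<Rightarrow> complex.
      Im (\<Sum>i<n. \<Sum>j<n. cnj (v i) * A i j * v j) = 0 \<and>
      Re (\<Sum>i<n. \<Sum>j<n. cnj (v i) * A i j * v j) \<ge> 0)"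

definition density :: "nat \<Rightarrow> cmat \<Rightarrow> bool" where
  "density n \<rho> \<longleftrightarrow> psd n \<rho> \<and> mtrace n \<rho> = 1"

definition povm2 :: "nat \<Rightarrow> (nat \<Rightarrow> cmat) \<Rightarrow> bool" where
  "povm2 d N \<longleftrightarrow> psd d (N 0) \<and> psd d (N 1) \<and>
     (\<forall>i<d. \<forall>j<d. N 0 i j + N 1 i j = idm i j)"

definition sigma_x :: cmat where
  "sigma_x i j = (if i \<noteq> j then 1 else 0)"

definition sigma_y :: cmat where
  "sigma_y i j = (if i = 0 \<and> j = 1 then - \<i> else if i = 1 \<and> j = 0 then \<i> else 0)"

definition obsA :: "nat \<Rightarrow> cmat" where
  "obsA x = (if x = 0 then sigma_x else sigma_y)"

definition obsB :: "nat \<Rightarrow> cmat" where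
  "obsB y = (if y = 0
      then (\<lambda>i j. (sigma_x i j - sigma_y i j) / complex_of_real (sqrt 2))
      else (\<lambda>i j. (sigma_x i j + sigma_y i j) / complex_of_real (sqrt 2)))"

definition proj :: "cmat \<Rightarrow> nat \<Rightarrow> cmat" where
  "proj Ob a i j = (idm i j + (-1) ^ a * Ob i j) / 2"

definition MA :: "nat \<Rightarrow> nat \<Rightarrow> cmat" where
  "MA a x = proj (obsA x) a"

definition MB :: "nat \<Rightarrow> nat \<Rightarrow> cmat" where
  "MB b y = proj (obsB y) b"

text \<open>Correlations P a b c x y z (outcomes a b c, settings x y z, all in {0,1}).\<close>
type_synonym corr = "nat \<Rightarrow> nat \<Rightarrow> nat \<Rightarrow> nat \<Rightarrow> nat \<Rightarrow> nat \<Rightarrow> real"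

definition svf :: "real \<Rightarrow> corr" where
  "svf V a b c x y z =
     (2 + (-1) ^ (a + b + c + x * y + y * z + x * z) * sqrt 2 * V) / 16"

text \<open>The hidden variable ranges over
  a finite index set L of naturals (the three sums of the paper are taken
  over L, with weights r, p, q).\<close>
definition stlhs :: "corr \<Rightarrow> bool" where
  "stlhs P \<longleftrightarrow>
   (\<exists>(L :: nat set) (r :: nat \<Rightarrow> real) (p :: nat \<Rightarrow> real) (q :: nat \<Rightarrow> real)
      (rhoAB :: nat \<Rightarrow> cmat) (PC :: nat \<Rightarrow> nat \<Rightarrow> nat \<Rightarrow> real)
      (rhoA :: nat \<Rightarrow> cmat) (rhoB :: nat \<Rightarrow> cmat)
      (dBC :: nat \<Rightarrow> nat) (tauBC :: nat \<Rightarrow> cmat) (NBC :: nat \<Rightarrow> nat \<Rightarrow> nat \<Rightarrow> cmat)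
      (dAC :: nat \<Rightarrow> nat) (tauAC :: nat \<Rightarrow> cmat) (NAC :: nat \<Rightarrow> nat \<Rightarrow> nat \<Rightarrow> cmat).
     finite L \<and>
     (\<forall>l\<in>L. r l \<ge> 0 \<and> p l \<ge> 0 \<and> q l \<ge> 0) \<and>
     (\<Sum>l\<in>L. r l + p l + q l) = 1 \<and>
     (\<forall>l\<in>L.
        density 4 (rhoAB l) \<and> density 2 (rhoA l) \<and> density 2 (rhoB l) \<and>
        (\<forall>z\<in>{0,1}. (\<forall>c\<in>{0,1}. PC l c z \<ge> 0) \<and> PC l 0 z + PC l 1 z = 1) \<and>
        dBC l \<ge> 1 \<and> density (2 * dBC l) (tauBC l) \<and>
        (\<forall>z\<in>{0,1}. povm2 (dBC l) (\<lambda>c. NBC l c z)) \<and>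
        dAC l \<ge> 1 \<and> density (2 * dAC l) (tauAC l) \<and>
        (\<forall>z\<in>{0,1}. povm2 (dAC l) (\<lambda>c. NAC l c z))) \<and>
     (\<forall>a\<in>{0,1}. \<forall>b\<in>{0,1}. \<forall>c\<in>{0,1}. \<forall>x\<in>{0,1}. \<forall>y\<in>{0,1}. \<forall>z\<in>{0,1}.
        complex_of_real (P a b c x y z) =
          (\<Sum>l\<in>L. complex_of_real (r l)
              * mtrace 4 (mmul 4 (kron 2 (MA a x) (MB b y)) (rhoAB l))
              * complex_of_real (PC l c z))
        + (\<Sum>l\<in>L. complex_of_real (p l)
              * mtrace 2 (mmul 2 (MA a x) (rhoA l))
              * mtrace (2 * dBC l) (mmul (2 * dBC l) (kron (dBC l) (MB b y) (NBC l c z)) (tauBC l)))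
        + (\<Sum>l\<in>L. complex_of_real (q l)
              * mtrace 2 (mmul 2 (MB b y) (rhoB l))
              * mtrace (2 * dAC l) (mmul (2 * dAC l) (kron (dAC l) (MA a x) (NAC l c z)) (tauAC l)))))"

definition genuine_steering_1sdi :: "corr \<Rightarrow> bool" where
  "genuine_steering_1sdi P \<longleftrightarrow> \<not> stlhs P"

end

theory Submission
  imports Defs
begin

(*
  Every term of an StLHS model has the same shape: one party only contributes numbers
  g(s) \<in> [-1, 1] (its outcome bias for setting s), while the other two share a state on
  C\<^sup>2 \<otimes> C\<^sup>d whose qubit is measured along the equator of the Bloch sphere and whose
  qudit is measured by hermitian contractions D(s) (differences of two-outcome POVM elements).
  On such a term the Svetlichny functional is the expectation of
    (g0 + g1) A0\<otimes>D0 + (g0 - g1) (A0\<otimes>D1 + A1\<otimes>D0) - (g0 + g1) A1\<otimes>D1,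
  an operator bounded by 4 by a Lagrange identity and AM-GM. So every StLHS correlation has
  Svetlichny value at most 4, while the family P^V_SvF has value 4 sqrt 2 V.
  Conversely, for sqrt 2 V \<le> 1 the family is an explicit model of the first kind: the states
  (|00> + e|11>)/sqrt 2 with e \<in> {\<plusminus>conj \<omega>, \<plusminus>\<omega>}, \<omega> = e^(i pi/4), each with weight sqrt 2 V / 4
  and a deterministic outcome for Charlie, plus the maximally mixed state with weight
  1 - sqrt 2 V and a uniformly random Charlie.
*)

section \<open>Vectors and positive semidefinite matrices\<close>

definition cinner :: "nat \<Rightarrow> (nat \<Rightarrow> complex) \<Rightarrow> (nat \<Rightarrow> complex) \<Rightarrow> complex" where
  "cinner n u w = (\<Sum>i<n. cnj (u i) * w i)"

definition mvmul :: "nat \<Rightarrow> cmat \<Rightarrow> (nat \<Rightarrow> complex) \<Rightarrow> nat \<Rightarrow> complex" where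
  "mvmul n A w i = (\<Sum>j<n. A i j * w j)"

definition sqnorm :: "nat \<Rightarrow> (nat \<Rightarrow> complex) \<Rightarrow> real" where
  "sqnorm n u = (\<Sum>i<n. (cmod (u i))\<^sup>2)"

abbreviation quadform :: "nat \<Rightarrow> cmat \<Rightarrow> (nat \<Rightarrow> complex) \<Rightarrow> complex" where
  "quadform n A v \<equiv> \<Sum>i<n. \<Sum>j<n. cnj (v i) * A i j * v j"

definition hermitian :: "nat \<Rightarrow> cmat \<Rightarrow> bool" where
  "hermitian n A \<longleftrightarrow> (\<forall>i<n. \<forall>j<n. A j i = cnj (A i j))"

definition contraction :: "nat \<Rightarrow> cmat \<Rightarrow> bool" where
  "contraction n A \<longleftrightarrow> (\<forall>v. sqnorm n (mvmul n A v) \<le> sqnorm n v)"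

lemma quadform_eq_cinner: "quadform n A v = cinner n v (mvmul n A v)"
  by (simp add: cinner_def mvmul_def sum_distrib_left mult.assoc)

lemma cinner_self: "cinner n u u = of_real (sqnorm n u)"
  unfolding cinner_def sqnorm_def of_real_sum
  by (rule sum.cong) (simp_all add: complex_norm_square[symmetric] mult.commute)

lemma sqnorm_nonneg: "0 \<le> sqnorm n u"
  by (simp add: sqnorm_def sum_nonneg)

lemma cinner_add_right: "cinner n u (\<lambda>i. v i + w i) = cinner n u v + cinner n u w"
  by (simp add: cinner_def sum.distrib algebra_simps)

lemma cinner_lincomb_right:
  "cinner n u (\<lambda>i. p * v i + q * w i) = p * cinner n u v + q * cinner n u w"
  by (simp add: cinner_def sum.distrib sum_distrib_left algebra_simps)

lemma cinner_cong:
  "(\<And>i. i < n \<Longrightarrow> u i = u' i) \<Longrightarrow> (\<And>i. i < n \<Longrightarrow> w i = w' i) \<Longrightarrow> cinner n u w = cinner n u' w'"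
  unfolding cinner_def by (intro sum.cong) auto

lemma mvmul_add: "mvmul n A (\<lambda>i. u i + w i) = (\<lambda>i. mvmul n A u i + mvmul n A w i)"
  by (rule ext) (simp add: mvmul_def sum.distrib distrib_left)

lemma mvmul_cong: "(\<And>j. j < n \<Longrightarrow> u j = w j) \<Longrightarrow> mvmul n A u i = mvmul n A w i"
  unfolding mvmul_def by (intro sum.cong) auto

lemma mvmul_idm: "i < n \<Longrightarrow> mvmul n idm u i = u i"
  unfolding mvmul_def idm_def by (simp add: if_distrib[of "\<lambda>x. x * _"] cong: if_cong)

lemma cinner_hermitian:
  assumes "hermitian n D"
  shows "cinner n u (mvmul n D w) = cnj (cinner n w (mvmul n D u))"
proof -
  have "cnj (cinner n w (mvmul n D u)) = (\<Sum>j<n. \<Sum>i<n. w j * (cnj (D j i) * cnj (u i)))"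
    unfolding cinner_def mvmul_def by (simp add: sum_distrib_left)
  also have "\<dots> = (\<Sum>j<n. \<Sum>i<n. w j * (D i j * cnj (u i)))"
  proof (intro sum.cong refl)
    fix i j assume "j \<in> {..<n}" "i \<in> {..<n}"
    with assms have "D j i = cnj (D i j)" unfolding hermitian_def by blast
    then show "w j * (cnj (D j i) * cnj (u i)) = w j * (D i j * cnj (u i))" by simp
  qed
  also have "\<dots> = cinner n u (mvmul n D w)"
    unfolding cinner_def mvmul_def by (subst sum.swap) (simp add: sum_distrib_left mult_ac)
  finally show ?thesis by simp
qed

lemma cinner_re_le:
  assumes "0 < c"
  shows "2 * Re (cinner d u w) \<le> c * sqnorm d u + sqnorm d w / c"
proof -
  have pointwise: "2 * Re (cnj a * b) \<le> c * (cmod a)\<^sup>2 + (cmod b)\<^sup>2 / c" for a b :: complex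
  proof -
    have "0 \<le> (cmod (of_real c * a - b))\<^sup>2 / c" using assms by simp
    also have "\<dots> = c * (cmod a)\<^sup>2 + (cmod b)\<^sup>2 / c - 2 * Re (cnj a * b)"
      using assms by (simp only: cmod_power2) (simp add: power2_eq_square field_simps)
    finally show ?thesis by simp
  qed
  have "2 * Re (cinner d u w) = (\<Sum>i<d. 2 * Re (cnj (u i) * w i))"
    by (simp add: cinner_def sum_distrib_left)
  also have "\<dots> \<le> (\<Sum>i<d. c * (cmod (u i))\<^sup>2 + (cmod (w i))\<^sup>2 / c)"
    by (rule sum_mono) (rule pointwise)
  also have "\<dots> = c * sqnorm d u + sqnorm d w / c"
    by (simp add: sqnorm_def sum.distrib sum_distrib_left sum_divide_distrib)
  finally show ?thesis .
qed

lemma psd_quadform: "psd n A \<Longrightarrow> Im (quadform n A v) = 0 \<and> 0 \<le> Re (quadform n A v)"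
  unfolding psd_def by blast

lemma psd_cinner: "psd n A \<Longrightarrow> Im (cinner n v (mvmul n A v)) = 0 \<and> 0 \<le> Re (cinner n v (mvmul n A v))"
  unfolding quadform_eq_cinner[symmetric] by (rule psd_quadform)

lemma quadform_unit: "i < n \<Longrightarrow> quadform n A (\<lambda>m. if m = i then 1 else 0) = A i i"
  by (simp add: if_distrib[of "\<lambda>x. x * _"] if_distrib[of "\<lambda>x. _ * x"] if_distrib[of cnj] cong: if_cong)

lemma quadform_two_point:
  assumes "i < n" "j < n" "i \<noteq> j"
  shows "quadform n A (\<lambda>m. if m = i then \<alpha> else if m = j then \<beta> else 0)
       = cnj \<alpha> * A i i * \<alpha> + cnj \<alpha> * A i j * \<beta> + cnj \<beta> * A j i * \<alpha> + cnj \<beta> * A j j * \<beta>"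
proof -
  have "quadform n A (\<lambda>m. if m = i then \<alpha> else if m = j then \<beta> else 0) =
     (\<Sum>k\<in>{i,j}. \<Sum>l\<in>{i,j}. cnj (if k = i then \<alpha> else \<beta>) * A k l * (if l = i then \<alpha> else \<beta>))"
    using assms by (intro sum.mono_neutral_cong_right) (auto intro!: sum.mono_neutral_cong_right)
  then show ?thesis using assms by simp
qed

lemma psd_diag:
  assumes "psd n A" "i < n"
  shows "A i i = of_real (Re (A i i)) \<and> 0 \<le> Re (A i i)"
  using psd_quadform[OF assms(1), of "\<lambda>m. if m = i then 1 else 0"] quadform_unit[OF assms(2)]
  by (simp add: complex_eq_iff)

lemma psd_hermitian:
  assumes "psd n A"
  shows "hermitian n A"
  unfolding hermitian_def
proof (intro allI impI)
  fix i j assume ij: "i < n" "j < n"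
  show "A j i = cnj (A i j)"
  proof (cases "i = j")
    case True
    then show ?thesis using psd_diag[OF assms ij(1)] by (simp add: complex_eq_iff)
  next
    case False
    have "Im (A i i + A i j + A j i + A j j) = 0"
      using psd_quadform[OF assms, of "\<lambda>m. if m = i then 1 else if m = j then 1 else 0"]
      unfolding quadform_two_point[OF ij False] by simp
    moreover have "Im (A i i + \<i> * A i j - \<i> * A j i + A j j) = 0"
      using psd_quadform[OF assms, of "\<lambda>m. if m = i then 1 else if m = j then \<i> else 0"]
      unfolding quadform_two_point[OF ij False] by (simp add: algebra_simps)
    ultimately show ?thesis
      using psd_diag[OF assms ij(1)] psd_diag[OF assms ij(2)] by (simp add: complex_eq_iff)
  qed
qed

lemma psd_outer_product: "psd n (\<lambda>i j. u i * cnj (u j))"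
  unfolding psd_def
proof
  fix v :: "nat \<Rightarrow> complex"
  define z where "z = (\<Sum>i<n. cnj (v i) * u i)"
  have "quadform n (\<lambda>i j. u i * cnj (u j)) v = z * cnj z"
    unfolding z_def by (simp add: sum_product mult_ac)
  then show "Im (quadform n (\<lambda>i j. u i * cnj (u j)) v) = 0 \<and> 0 \<le> Re (quadform n (\<lambda>i j. u i * cnj (u j)) v)"
    by (simp add: complex_norm_square[symmetric])
qed

lemma density_maximally_mixed: "0 < n \<Longrightarrow> density n (\<lambda>i j. idm i j / of_nat n)"
proof -
  assume n: "0 < n"
  have "quadform n (\<lambda>i j. idm i j / of_nat n) v = of_real (sqnorm n v / n)" for v
  proof -
    have "quadform n (\<lambda>i j. idm i j / of_nat n) v = (\<Sum>i<n. cnj (v i) * v i / of_nat n)"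
      by (intro sum.cong refl)
         (simp add: idm_def if_distrib[of "\<lambda>x. x * _"] if_distrib[of "\<lambda>x. _ * x"]
            flip: sum_divide_distrib cong: if_cong)
    also have "\<dots> = cinner n v v / of_nat n"
      by (simp add: cinner_def sum_divide_distrib)
    finally show ?thesis by (simp add: cinner_self)
  qed
  then show ?thesis
    using n sqnorm_nonneg by (simp add: density_def psd_def mtrace_def idm_def)
qed

section \<open>Gram decomposition of positive semidefinite matrices\<close>

lemma quadform_shift:
  assumes "m < n"
  shows "quadform n A (\<lambda>i. v i + (if i = m then t else 0)) =
         quadform n A v + cnj t * (\<Sum>j<n. A m j * v j) + t * (\<Sum>i<n. cnj (v i) * A i m) + cnj t * A m m * t"
proof -
  have "quadform n A (\<lambda>i. v i + (if i = m then t else 0)) =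
        (\<Sum>i<n. \<Sum>j<n. cnj (v i) * A i j * v j + cnj (v i) * A i j * (if j = m then t else 0)
             + (if i = m then cnj t else 0) * A i j * v j + (if i = m then cnj t else 0) * A i j * (if j = m then t else 0))"
    by (intro sum.cong refl) (simp add: algebra_simps)
  also have "\<dots> = quadform n A v + (\<Sum>i<n. \<Sum>j<n. cnj (v i) * A i j * (if j = m then t else 0))
      + (\<Sum>i<n. \<Sum>j<n. (if i = m then cnj t else 0) * A i j * v j)
      + (\<Sum>i<n. \<Sum>j<n. (if i = m then cnj t else 0) * A i j * (if j = m then t else 0))"
    by (simp add: sum.distrib)
  also have "(\<Sum>i<n. \<Sum>j<n. cnj (v i) * A i j * (if j = m then t else 0)) = t * (\<Sum>i<n. cnj (v i) * A i m)"
    using assms by (simp add: sum_distrib_left mult.commute mult.left_commute if_distrib[of "\<lambda>x. _ * x"] cong: if_cong)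
  also have "(\<Sum>i<n. \<Sum>j<n. (if i = m then cnj t else 0) * A i j * v j) = cnj t * (\<Sum>j<n. A m j * v j)"
  proof -
    have "\<And>i. (\<Sum>j<n. (if i = m then cnj t else 0) * A i j * v j) = (if i = m then cnj t * (\<Sum>j<n. A m j * v j) else 0)"
      by (simp add: sum_distrib_left mult.assoc)
    then show ?thesis using assms by simp
  qed
  also have "(\<Sum>i<n. \<Sum>j<n. (if i = m then cnj t else 0) * A i j * (if j = m then t else 0)) = cnj t * A m m * t"
    using assms by (simp add: if_distrib[of "\<lambda>x. x * _"] if_distrib[of "\<lambda>x. _ * x"] cong: if_cong)
  finally show ?thesis by (simp add: algebra_simps)
qed

lemma psd_zero_diag_row:
  assumes "psd n A" "m < n" "A m m = 0" "j < n"
  shows "A m j = 0"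
proof (rule ccontr)
  assume x0: "A m j \<noteq> 0"
  then have jm: "j \<noteq> m" using assms(3) by auto
  define x where "x = A m j"
  define s :: real where "s = (\<bar>Re (A j j)\<bar> + 1) / (2 * (cmod x)\<^sup>2)"
  define t where "t = - of_real s * x"
  have "A j m = cnj x"
    using psd_hermitian[OF assms(1)] assms(2,4) unfolding hermitian_def x_def by blast
  then have "quadform n A (\<lambda>i. if i = j then 1 else if i = m then t else 0) = A j j + cnj t * x + t * cnj x"
    unfolding quadform_two_point[OF assms(4,2) jm] using assms(3) x_def by (simp add: algebra_simps)
  moreover have "Re (cnj t * x + t * cnj x) = - 2 * s * (cmod x)\<^sup>2"
    unfolding t_def by (simp add: cmod_power2; simp add: power2_eq_square algebra_simps)
  moreover have "- 2 * s * (cmod x)\<^sup>2 = - (\<bar>Re (A j j)\<bar> + 1)"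
    using x0 by (simp add: s_def x_def)
  ultimately have "Re (quadform n A (\<lambda>i. if i = j then 1 else if i = m then t else 0)) < 0"
    by simp
  with psd_quadform[OF assms(1)] show False by (meson not_le)
qed

lemma psd_schur_complement:
  assumes psd: "psd n A" and m: "m < n" and amm: "A m m = of_real a" and a: "0 < a"
  shows "psd n (\<lambda>i j. A i j - A i m * cnj (A j m) / of_real a)"
  unfolding psd_def
proof
  fix v :: "nat \<Rightarrow> complex"
  have herm: "\<And>j. j < n \<Longrightarrow> A j m = cnj (A m j)"
    using psd_hermitian[OF psd] m unfolding hermitian_def by blast
  define \<beta> where "\<beta> = (\<Sum>j<n. A m j * v j)"
  have col: "(\<Sum>i<n. cnj (v i) * A i m) = cnj \<beta>"
    unfolding \<beta>_def by (simp add: herm mult.commute)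
  have row: "(\<Sum>j<n. cnj (A j m) * v j) = \<beta>"
    unfolding \<beta>_def by (intro sum.cong refl) (simp add: herm)
  have "quadform n (\<lambda>i j. A i j - A i m * cnj (A j m) / of_real a) v
      = quadform n A v - (\<Sum>i<n. cnj (v i) * A i m) * (\<Sum>j<n. cnj (A j m) * v j) / of_real a"
    by (simp add: right_diff_distrib left_diff_distrib sum_subtractf sum_product sum_divide_distrib mult_ac,
        rule sum.swap)
  also have "\<dots> = quadform n A (\<lambda>i. v i + (if i = m then - \<beta> / of_real a else 0))"
    unfolding quadform_shift[OF m] \<beta>_def[symmetric] col row amm using a
    by (simp add: field_simps)
  finally show "Im (quadform n (\<lambda>i j. A i j - A i m * cnj (A j m) / of_real a) v) = 0 \<and>
      0 \<le> Re (quadform n (\<lambda>i j. A i j - A i m * cnj (A j m) / of_real a) v)"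
    using psd_quadform[OF psd] by presburger
qed

text \<open>One step of Cholesky elimination: split off a rank-one part so that row and column \<open>m\<close> vanish.\<close>
lemma psd_eliminate_index:
  assumes psd: "psd n A" and m: "m < n"
    and supp: "\<forall>i<n. \<forall>j<n. (i < m \<or> j < m) \<longrightarrow> A i j = 0"
  obtains A' c where "psd n A'" "\<forall>i<n. \<forall>j<n. (i < Suc m \<or> j < Suc m) \<longrightarrow> A' i j = 0"
    "\<forall>i<n. \<forall>j<n. A i j = A' i j + c i * cnj (c j)"
proof -
  have herm: "\<And>i j. i < n \<Longrightarrow> j < n \<Longrightarrow> A j i = cnj (A i j)"
    using psd_hermitian[OF psd] unfolding hermitian_def by blast
  define a where "a = Re (A m m)"
  have amm: "A m m = of_real a" "0 \<le> a" using psd_diag[OF psd m] a_def by auto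
  show thesis
  proof (cases "a = 0")
    case True
    have "A m j = 0" "A j m = 0" if "j < n" for j
      using psd_zero_diag_row[OF psd m _ that] herm[OF m that] amm True by auto
    then have "\<forall>i<n. \<forall>j<n. (i < Suc m \<or> j < Suc m) \<longrightarrow> A i j = 0"
      using supp by (metis less_antisym)
    with psd show thesis by (intro that[of A "\<lambda>_. 0"]) auto
  next
    case False
    then have a: "0 < a" using amm(2) by simp
    define A' where "A' = (\<lambda>i j. A i j - A i m * cnj (A j m) / of_real a)"
    have "psd n A'" unfolding A'_def by (rule psd_schur_complement[OF psd m amm(1) a])
    moreover have "\<forall>i<n. \<forall>j<n. (i < Suc m \<or> j < Suc m) \<longrightarrow> A' i j = 0"
    proof (intro allI impI)
      fix i j assume ij: "i < n" "j < n" "i < Suc m \<or> j < Suc m"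
      then consider "i < m" | "j < m" | "i = m" | "j = m" by linarith
      then show "A' i j = 0"
        unfolding A'_def using supp ij(1,2) m herm[OF ij(2) m] amm a by cases auto
    qed
    moreover have "of_real (sqrt a) * of_real (sqrt a) = (of_real a :: complex)"
      using a by (simp flip: of_real_mult)
    then have "\<forall>i<n. \<forall>j<n. A i j = A' i j + A i m / of_real (sqrt a) * cnj (A j m / of_real (sqrt a))"
      using a by (simp add: A'_def field_simps)
    ultimately show thesis by (rule that)
  qed
qed

lemma psd_gram_supported:
  assumes "psd n A" "\<forall>i<n. \<forall>j<n. (i < n - k \<or> j < n - k) \<longrightarrow> A i j = 0"
  shows "\<exists>(F :: nat \<Rightarrow> nat \<Rightarrow> complex) (K :: nat). \<forall>i<n. \<forall>j<n. A i j = (\<Sum>q<K. F q i * cnj (F q j))"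
  using assms
proof (induction k arbitrary: A)
  case 0
  then show ?case by (intro exI[of _ "\<lambda>_ _. 0"] exI[of _ 0]) auto
next
  case (Suc k)
  show ?case
  proof (cases "k < n")
    case False
    then show ?thesis using Suc by simp
  next
    case True
    then have m: "n - Suc k < n" and nk: "n - k = Suc (n - Suc k)" by auto
    obtain A' c where "psd n A'" "\<forall>i<n. \<forall>j<n. (i < n - k \<or> j < n - k) \<longrightarrow> A' i j = 0"
      and split: "\<forall>i<n. \<forall>j<n. A i j = A' i j + c i * cnj (c j)"
      using psd_eliminate_index[OF Suc.prems(1) m Suc.prems(2)] unfolding nk by blast
    then obtain F :: "nat \<Rightarrow> nat \<Rightarrow> complex" and K :: nat
      where FK: "\<forall>i<n. \<forall>j<n. A' i j = (\<Sum>q<K. F q i * cnj (F q j))"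
      using Suc.IH by blast
    have "A i j = (\<Sum>q<Suc K. (F(K := c)) q i * cnj ((F(K := c)) q j))" if "i < n" "j < n" for i j
      using split FK that by simp
    then show ?thesis by blast
  qed
qed

lemma psd_gram:
  assumes "psd n A"
  shows "\<exists>(F :: nat \<Rightarrow> nat \<Rightarrow> complex) (K :: nat). \<forall>i<n. \<forall>j<n. A i j = (\<Sum>q<K. F q i * cnj (F q j))"
  using psd_gram_supported[of n A n] assms by simp

lemma trace_gram:
  assumes "\<forall>i<n. \<forall>j<n. \<tau> i j = (\<Sum>q<K. F q i * cnj (F q j))"
  shows "mtrace n (mmul n M \<tau>) = (\<Sum>q<K. cinner n (F q) (mvmul n M (F q)))"
    and "mtrace n \<tau> = of_real (\<Sum>q<K. sqnorm n (F q))"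
proof -
  have "mtrace n (mmul n M \<tau>) = (\<Sum>i<n. \<Sum>j<n. M i j * (\<Sum>q<K. F q j * cnj (F q i)))"
    unfolding mtrace_def mmul_def using assms by (intro sum.cong refl) auto
  also have "\<dots> = (\<Sum>i<n. \<Sum>q<K. \<Sum>j<n. cnj (F q i) * (M i j * F q j))"
    by (simp add: sum_distrib_left mult_ac sum.swap[of _ "{..<n}" "{..<K}"])
  also have "\<dots> = (\<Sum>q<K. cinner n (F q) (mvmul n M (F q)))"
    unfolding cinner_def mvmul_def by (simp add: sum_distrib_left sum.swap[of _ "{..<n}" "{..<K}"])
  finally show "mtrace n (mmul n M \<tau>) = (\<Sum>q<K. cinner n (F q) (mvmul n M (F q)))" .
  have "mtrace n \<tau> = (\<Sum>i<n. \<Sum>q<K. F q i * cnj (F q i))"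
    unfolding mtrace_def using assms by (intro sum.cong) auto
  also have "\<dots> = (\<Sum>q<K. cinner n (F q) (F q))"
    unfolding cinner_def by (subst sum.swap) (simp add: mult.commute)
  finally show "mtrace n \<tau> = of_real (\<Sum>q<K. sqnorm n (F q))" by (simp add: cinner_self)
qed

lemma density_trace_hermitian_contraction:
  assumes \<rho>: "density n \<rho>" and h: "hermitian n M" and c: "contraction n M"
  shows "mtrace n (mmul n M \<rho>) = of_real (Re (mtrace n (mmul n M \<rho>)))"
    and "\<bar>Re (mtrace n (mmul n M \<rho>))\<bar> \<le> 1"
proof -
  obtain F :: "nat \<Rightarrow> nat \<Rightarrow> complex" and K :: nat
    where FK: "\<forall>i<n. \<forall>j<n. \<rho> i j = (\<Sum>q<K. F q i * cnj (F q j))"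
    using psd_gram \<rho> unfolding density_def by blast
  have real: "Im (cinner n (F q) (mvmul n M (F q))) = 0" for q
    using cinner_hermitian[OF h, of "F q" "F q"] by (metis Reals_cnj_iff complex_is_Real_iff)
  have bound: "\<bar>Re (cinner n (F q) (mvmul n M (F q)))\<bar> \<le> sqnorm n (F q)" for q
  proof -
    have "sqnorm n (mvmul n M (F q)) \<le> sqnorm n (F q)"
      using c unfolding contraction_def by blast
    moreover have "2 * Re (cinner n (F q) (mvmul n M (F q))) \<le> sqnorm n (F q) + sqnorm n (mvmul n M (F q))"
      using cinner_re_le[of 1 n "F q" "mvmul n M (F q)"] by simp
    moreover have "- 2 * Re (cinner n (F q) (mvmul n M (F q))) \<le> sqnorm n (F q) + sqnorm n (mvmul n M (F q))"
      using cinner_re_le[of 1 n "\<lambda>i. - F q i" "mvmul n M (F q)"]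
      by (simp add: cinner_def sqnorm_def sum_negf)
    ultimately show ?thesis by linarith
  qed
  have "Im (mtrace n (mmul n M \<rho>)) = 0"
    unfolding trace_gram(1)[OF FK] by (simp add: real)
  then show "mtrace n (mmul n M \<rho>) = of_real (Re (mtrace n (mmul n M \<rho>)))"
    by (simp add: complex_eq_iff)
  have "\<bar>Re (mtrace n (mmul n M \<rho>))\<bar> \<le> (\<Sum>q<K. sqnorm n (F q))"
    unfolding trace_gram(1)[OF FK] Re_sum by (rule order_trans[OF sum_abs sum_mono]) (rule bound)
  also have "\<dots> = 1"
    using \<rho> trace_gram(2)[OF FK] by (simp add: density_def flip: of_real_sum)
  finally show "\<bar>Re (mtrace n (mmul n M \<rho>))\<bar> \<le> 1" .
qed

section \<open>Two-outcome measurements\<close>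

lemma povm2_diff_hermitian:
  assumes "povm2 d N"
  shows "hermitian d (\<lambda>i j. N 0 i j - N 1 i j)"
  unfolding hermitian_def
proof (intro allI impI)
  fix i j assume "i < d" "j < d"
  then have "N c j i = cnj (N c i j)" if "c \<in> {0, 1}" for c
    using psd_hermitian[of d "N c"] assms that unfolding povm2_def hermitian_def by blast
  then show "N 0 j i - N 1 j i = cnj (N 0 i j - N 1 i j)" by simp
qed

lemma sqnorm_add_minus_sqnorm_diff:
  "sqnorm d (\<lambda>i. u i + w i) - sqnorm d (\<lambda>i. u i - w i) = 4 * Re (cinner d u w)"
proof -
  have "sqnorm d (\<lambda>i. u i + w i) - sqnorm d (\<lambda>i. u i - w i) = (\<Sum>i<d. 4 * Re (cnj (u i) * w i))"
    unfolding sqnorm_def sum_subtractf[symmetric]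
    by (intro sum.cong refl) (simp only: cmod_power2, simp add: power2_eq_square algebra_simps)
  then show ?thesis by (simp add: cinner_def sum_distrib_left)
qed

lemma povm2_mvmul_complete:
  assumes "povm2 d N" "i < d"
  shows "mvmul d (N 0) u i + mvmul d (N 1) u i = u i"
proof -
  have "mvmul d (N 0) u i + mvmul d (N 1) u i = mvmul d idm u i"
    unfolding mvmul_def sum.distrib[symmetric] distrib_right[symmetric]
    using assms by (intro sum.cong refl) (simp add: povm2_def)
  then show ?thesis using mvmul_idm[OF assms(2)] by simp
qed

text \<open>With \<open>n\<^sub>c = N\<^sub>c \<phi>\<close> one has \<open>\<phi> = n\<^sub>0 + n\<^sub>1\<close> and
  \<open>\<parallel>\<phi>\<parallel>\<^sup>2 - \<parallel>n\<^sub>0 - n\<^sub>1\<parallel>\<^sup>2 = 4 Re \<langle>n\<^sub>0, n\<^sub>1\<rangle> = 4 Re (\<langle>n\<^sub>0, N\<^sub>1 n\<^sub>0\<rangle> + \<langle>n\<^sub>1, N\<^sub>0 n\<^sub>1\<rangle>) \<ge> 0\<close>.\<close>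
lemma povm2_diff_contraction:
  assumes N: "povm2 d N"
  shows "contraction d (\<lambda>i j. N 0 i j - N 1 i j)"
  unfolding contraction_def
proof
  fix \<phi> :: "nat \<Rightarrow> complex"
  have p0: "psd d (N 0)" and p1: "psd d (N 1)"
    using N by (simp_all add: povm2_def)
  define n0 where "n0 = mvmul d (N 0) \<phi>"
  define n1 where "n1 = mvmul d (N 1) \<phi>"
  have split: "n0 i + n1 i = \<phi> i" if "i < d" for i
    unfolding n0_def n1_def using povm2_mvmul_complete[OF N that] .
  have n1_eq: "n1 i = mvmul d (N 1) (\<lambda>j. n0 j + n1 j) i" for i
  proof -
    have "mvmul d (N 1) (\<lambda>j. n0 j + n1 j) i = mvmul d (N 1) \<phi> i"
      by (rule mvmul_cong) (rule split)
    then show ?thesis by (simp only: n1_def[symmetric])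
  qed
  have N1n0: "mvmul d (N 1) n0 i = mvmul d (N 0) n1 i" if "i < d" for i
    using n1_eq[of i] povm2_mvmul_complete[OF N that, of n1] unfolding mvmul_add
    by (metis add_right_cancel)
  have "cinner d n0 n1 = cinner d n0 (mvmul d (N 1) (\<lambda>j. n0 j + n1 j))"
    by (rule cinner_cong) (simp_all only: n1_eq[symmetric])
  also have "\<dots> = cinner d n0 (mvmul d (N 1) n0) + cnj (cinner d n1 (mvmul d (N 1) n0))"
    unfolding mvmul_add cinner_add_right cinner_hermitian[OF psd_hermitian[OF p1], of n0 n1] ..
  also have "cinner d n1 (mvmul d (N 1) n0) = cinner d n1 (mvmul d (N 0) n1)"
    by (rule cinner_cong, simp, rule N1n0)
  finally have "0 \<le> Re (cinner d n0 n1)"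
    using psd_cinner[OF p1, of n0] psd_cinner[OF p0, of n1] by simp
  moreover have "sqnorm d \<phi> = sqnorm d (\<lambda>i. n0 i + n1 i)"
    by (simp add: sqnorm_def split)
  moreover have "mvmul d (\<lambda>i j. N 0 i j - N 1 i j) \<phi> = (\<lambda>i. n0 i - n1 i)"
    unfolding n0_def n1_def mvmul_def by (simp add: sum_subtractf left_diff_distrib)
  ultimately show "sqnorm d (mvmul d (\<lambda>i j. N 0 i j - N 1 i j) \<phi>) \<le> sqnorm d \<phi>"
    using sqnorm_add_minus_sqnorm_diff[of d n0 n1] by simp
qed

lemma povm2_trivial: "povm2 1 (\<lambda>c i j. if c = 0 then idm i j else 0)"
  by (simp add: povm2_def psd_def idm_def)

text \<open>The observables \<open>cos \<theta> \<sigma>\<^sub>x + sin \<theta> \<sigma>\<^sub>y\<close>, described by their upper-left \<open>2 \<times> 2\<close> block.\<close>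
definition equatorial :: "cmat \<Rightarrow> bool" where
  "equatorial A \<longleftrightarrow> A 0 0 = 0 \<and> A 1 1 = 0 \<and> A 1 0 = cnj (A 0 1) \<and> cmod (A 0 1) = 1"

lemma equatorial_hermitian: "equatorial A \<Longrightarrow> hermitian 2 A"
  by (auto simp: equatorial_def hermitian_def less_2_cases_iff)

lemma equatorial_contraction: "equatorial A \<Longrightarrow> contraction 2 A"
  by (simp add: equatorial_def contraction_def sqnorm_def mvmul_def numeral_2_eq_2 norm_mult)

lemma equatorial_obsA: "equatorial (obsA x)"
  by (simp add: equatorial_def obsA_def sigma_x_def sigma_y_def)

lemma equatorial_obsB: "equatorial (obsB y)"
proof -
  have "cmod (1 + \<i>) = sqrt 2" "cmod (1 - \<i>) = sqrt 2"
    by (simp_all add: cmod_def)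
  then show ?thesis
    by (simp add: equatorial_def obsB_def sigma_x_def sigma_y_def norm_divide)
qed

lemma proj_diff: "(\<lambda>i j. proj Ob 0 i j - proj Ob 1 i j) = Ob"
  by (intro ext) (simp add: proj_def field_simps)

lemma trace_proj_diff:
  "mtrace n (mmul n (proj Ob 0) \<rho>) - mtrace n (mmul n (proj Ob 1) \<rho>) = mtrace n (mmul n Ob \<rho>)"
proof -
  have "mtrace n (mmul n Ob \<rho>) = mtrace n (mmul n (\<lambda>i j. proj Ob 0 i j - proj Ob 1 i j) \<rho>)"
    by (simp only: proj_diff)
  then show ?thesis by (simp add: mtrace_def mmul_def left_diff_distrib sum_subtractf)
qed

lemma trace_kron_proj_correlator:
  "mtrace n (mmul n (kron d (proj Ob 0) N0) \<tau>) - mtrace n (mmul n (kron d (proj Ob 0) N1) \<tau>)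
   - mtrace n (mmul n (kron d (proj Ob 1) N0) \<tau>) + mtrace n (mmul n (kron d (proj Ob 1) N1) \<tau>)
   = mtrace n (mmul n (kron d Ob (\<lambda>i j. N0 i j - N1 i j)) \<tau>)"
proof -
  have "kron d Ob (\<lambda>i j. N0 i j - N1 i j) = (\<lambda>i j. kron d (proj Ob 0) N0 i j - kron d (proj Ob 0) N1 i j
      - kron d (proj Ob 1) N0 i j + kron d (proj Ob 1) N1 i j)"
    by (intro ext) (simp add: kron_def proj_def field_simps)
  then show ?thesis
    by (simp add: mtrace_def mmul_def left_diff_distrib distrib_right sum.distrib sum_subtractf)
qed

section \<open>The Svetlichny operator on the qubit-qudit space\<close>

lemma sum_lessThan_mult_blocks:
  fixes n k :: nat
  shows "(\<Sum>i<n*k. g i) = (\<Sum>a<n. \<Sum>s<k. g (a*k + s))"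
proof -
  have "(\<Sum>i<n*k. g i) = (\<Sum>a<n. sum g {a*k..<a*k+k})" by (rule sum.nat_group[symmetric])
  also have "\<dots> = (\<Sum>a<n. \<Sum>s<k. g (a*k + s))"
  proof (rule sum.cong, simp)
    fix a
    show "sum g {a*k..<a*k+k} = (\<Sum>s<k. g (a*k + s))"
      using sum.shift_bounds_nat_ivl[of g 0 "a*k" k] by (simp add: atLeast0LessThan add.commute)
  qed
  finally show ?thesis .
qed

lemma sqnorm_two_blocks: "sqnorm (2*d) \<psi> = sqnorm d \<psi> + sqnorm d (\<lambda>s. \<psi> (d+s))"
  unfolding sqnorm_def using sum_lessThan_mult_blocks[where n=2 and k=d and g="\<lambda>i. (cmod (\<psi> i))\<^sup>2"]
  by (simp add: numeral_2_eq_2)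

lemma cinner_kron:
  "cinner (2*d) \<psi> (mvmul (2*d) (kron d A C) \<psi>) =
    (\<Sum>a<2. \<Sum>b<2. A a b * cinner d (\<lambda>s. \<psi> (a*d+s)) (mvmul d C (\<lambda>s. \<psi> (b*d+s))))"
proof (cases "d = 0")
  case True
  then show ?thesis by (simp add: cinner_def)
next
  case False
  have block: "mvmul (2*d) (kron d A C) \<psi> (a*d+s) = (\<Sum>b<2. A a b * mvmul d C (\<lambda>s. \<psi> (b*d+s)) s)"
    if "s < d" for a s
  proof -
    have "mvmul (2*d) (kron d A C) \<psi> (a*d+s) = (\<Sum>b<2. \<Sum>t<d. kron d A C (a*d+s) (b*d+t) * \<psi> (b*d+t))"
      unfolding mvmul_def by (rule sum_lessThan_mult_blocks)
    also have "\<dots> = (\<Sum>b<2. \<Sum>t<d. A a b * (C s t * \<psi> (b*d+t)))"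
      using that False by (intro sum.cong refl) (simp add: kron_def)
    finally show ?thesis by (simp add: mvmul_def sum_distrib_left)
  qed
  have "cinner (2*d) \<psi> (mvmul (2*d) (kron d A C) \<psi>)
      = (\<Sum>a<2. \<Sum>s<d. cnj (\<psi> (a*d+s)) * mvmul (2*d) (kron d A C) \<psi> (a*d+s))"
    unfolding cinner_def by (rule sum_lessThan_mult_blocks)
  also have "\<dots> = (\<Sum>a<2. \<Sum>s<d. \<Sum>b<2. A a b * (cnj (\<psi> (a*d+s)) * mvmul d C (\<lambda>s. \<psi> (b*d+s)) s))"
    by (intro sum.cong refl) (simp add: block sum_distrib_left mult.left_commute)
  also have "\<dots> = (\<Sum>a<2. \<Sum>b<2. A a b * cinner d (\<lambda>s. \<psi> (a*d+s)) (mvmul d C (\<lambda>s. \<psi> (b*d+s))))"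
    unfolding cinner_def by (simp add: sum_distrib_left sum.swap[of _ "{..<d}" "{..<2}"])
  finally show ?thesis .
qed

lemma cinner_kron_equatorial:
  assumes "equatorial A"
  shows "cinner (2*d) \<psi> (mvmul (2*d) (kron d A C) \<psi>) =
    A 0 1 * cinner d \<psi> (mvmul d C (\<lambda>s. \<psi> (d+s))) + cnj (A 0 1) * cinner d (\<lambda>s. \<psi> (d+s)) (mvmul d C \<psi>)"
  using assms unfolding cinner_kron by (simp add: numeral_2_eq_2 equatorial_def)

lemma lagrange_identity_complex:
  "((cmod p)\<^sup>2 + (cmod q)\<^sup>2) * ((cmod u)\<^sup>2 + (cmod w)\<^sup>2)
   = (cmod (p*u + q*w))\<^sup>2 + (cmod (cnj q * u - cnj p * w))\<^sup>2"
  by (simp only: cmod_power2) (simp add: power2_eq_square algebra_simps)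

lemma sqnorm_lincomb_le:
  "sqnorm d (\<lambda>i. p * u i + q * w i) \<le> ((cmod p)\<^sup>2 + (cmod q)\<^sup>2) * (sqnorm d u + sqnorm d w)"
proof -
  have "sqnorm d (\<lambda>i. p * u i + q * w i)
      \<le> (\<Sum>i<d. ((cmod p)\<^sup>2 + (cmod q)\<^sup>2) * ((cmod (u i))\<^sup>2 + (cmod (w i))\<^sup>2))"
    unfolding sqnorm_def by (rule sum_mono) (simp add: lagrange_identity_complex)
  also have "\<dots> = ((cmod p)\<^sup>2 + (cmod q)\<^sup>2) * (sqnorm d u + sqnorm d w)"
    by (simp add: sqnorm_def distrib_left sum_distrib_left sum.distrib)
  finally show ?thesis .
qed

text \<open>The left-hand side is \<open>2 Re \<langle>\<phi>\<^sub>0, p D\<^sub>0\<phi>\<^sub>1 + q D\<^sub>1\<phi>\<^sub>1\<rangle>\<close> with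
  \<open>p = \<alpha> o\<^sub>0 + \<beta> o\<^sub>1\<close>, \<open>q = \<beta> o\<^sub>0 - \<alpha> o\<^sub>1\<close> and \<open>|p|\<^sup>2 + |q|\<^sup>2 = 2(\<alpha>\<^sup>2 + \<beta>\<^sup>2) \<le> 8\<close>;
  AM-GM with weight 4 closes the bound.\<close>
lemma svetlichny_block_le:
  fixes \<alpha> \<beta> :: real
  assumes h0: "hermitian d D0" and h1: "hermitian d D1"
      and c0: "contraction d D0" and c1: "contraction d D1"
      and o0: "cmod o0 = 1" and o1: "cmod o1 = 1"
      and ab: "\<alpha>\<^sup>2 + \<beta>\<^sup>2 \<le> 4"
  shows "Re (of_real \<alpha> * (o0 * cinner d \<phi>0 (mvmul d D0 \<phi>1) + cnj o0 * cinner d \<phi>1 (mvmul d D0 \<phi>0))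
           + of_real \<beta> * (o0 * cinner d \<phi>0 (mvmul d D1 \<phi>1) + cnj o0 * cinner d \<phi>1 (mvmul d D1 \<phi>0))
           + of_real \<beta> * (o1 * cinner d \<phi>0 (mvmul d D0 \<phi>1) + cnj o1 * cinner d \<phi>1 (mvmul d D0 \<phi>0))
           - of_real \<alpha> * (o1 * cinner d \<phi>0 (mvmul d D1 \<phi>1) + cnj o1 * cinner d \<phi>1 (mvmul d D1 \<phi>0)))
         \<le> 4 * (sqnorm d \<phi>0 + sqnorm d \<phi>1)" (is "Re ?S \<le> _")
proof -
  define z0 where "z0 = cinner d \<phi>0 (mvmul d D0 \<phi>1)"
  define z1 where "z1 = cinner d \<phi>0 (mvmul d D1 \<phi>1)"
  define p where "p = of_real \<alpha> * o0 + of_real \<beta> * o1"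
  define q where "q = of_real \<beta> * o0 - of_real \<alpha> * o1"
  define v where "v = (\<lambda>i. p * mvmul d D0 \<phi>1 i + q * mvmul d D1 \<phi>1 i)"
  have "cinner d \<phi>1 (mvmul d D0 \<phi>0) = cnj z0" "cinner d \<phi>1 (mvmul d D1 \<phi>0) = cnj z1"
    unfolding z0_def z1_def by (rule cinner_hermitian[OF h0], rule cinner_hermitian[OF h1])
  then have lhs: "Re ?S = 2 * Re (cinner d \<phi>0 v)"
    unfolding v_def cinner_lincomb_right z0_def[symmetric] z1_def[symmetric] p_def q_def
    by (simp add: algebra_simps)
  have pq: "(cmod p)\<^sup>2 + (cmod q)\<^sup>2 = 2 * (\<alpha>\<^sup>2 + \<beta>\<^sup>2)"
    using lagrange_identity_complex[of "of_real \<alpha>" "of_real \<beta>" o0 o1] o0 o1 unfolding p_def q_def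
    by (simp add: power2_eq_square algebra_simps)
  have "sqnorm d v \<le> ((cmod p)\<^sup>2 + (cmod q)\<^sup>2) * (sqnorm d (mvmul d D0 \<phi>1) + sqnorm d (mvmul d D1 \<phi>1))"
    unfolding v_def by (rule sqnorm_lincomb_le)
  also have "\<dots> \<le> 8 * (sqnorm d (mvmul d D0 \<phi>1) + sqnorm d (mvmul d D1 \<phi>1))"
    using pq ab by (intro mult_right_mono) (simp_all add: sqnorm_nonneg)
  also have "\<dots> \<le> 16 * sqnorm d \<phi>1"
    using c0[unfolded contraction_def, rule_format, of \<phi>1] c1[unfolded contraction_def, rule_format, of \<phi>1]
    by (simp add: algebra_simps)
  finally show ?thesis
    unfolding lhs using cinner_re_le[of 4 d \<phi>0 v] by simp
qed

lemma svetlichny_trace_le: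
  fixes \<alpha> \<beta> :: real
  assumes \<tau>: "density (2*d) \<tau>"
    and A0: "equatorial A0" and A1: "equatorial A1"
    and h0: "hermitian d D0" and h1: "hermitian d D1"
    and c0: "contraction d D0" and c1: "contraction d D1"
    and ab: "\<alpha>\<^sup>2 + \<beta>\<^sup>2 \<le> 4"
  shows "Re (of_real \<alpha> * mtrace (2*d) (mmul (2*d) (kron d A0 D0) \<tau>)
           + of_real \<beta> * mtrace (2*d) (mmul (2*d) (kron d A0 D1) \<tau>)
           + of_real \<beta> * mtrace (2*d) (mmul (2*d) (kron d A1 D0) \<tau>)
           - of_real \<alpha> * mtrace (2*d) (mmul (2*d) (kron d A1 D1) \<tau>)) \<le> 4" (is "Re ?S \<le> _")
proof -
  obtain F :: "nat \<Rightarrow> nat \<Rightarrow> complex" and K :: nat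
    where FK: "\<forall>i<2*d. \<forall>j<2*d. \<tau> i j = (\<Sum>q<K. F q i * cnj (F q j))"
    using psd_gram \<tau> unfolding density_def by blast
  let ?Q = "\<lambda>A D q. cinner (2*d) (F q) (mvmul (2*d) (kron d A D) (F q))"
  have "Re ?S = (\<Sum>q<K. Re (of_real \<alpha> * ?Q A0 D0 q + of_real \<beta> * ?Q A0 D1 q + of_real \<beta> * ?Q A1 D0 q
                    - of_real \<alpha> * ?Q A1 D1 q))"
    unfolding trace_gram(1)[OF FK] Re_sum[symmetric]
    by (simp add: sum.distrib sum_subtractf sum_distrib_left)
  also have "\<dots> \<le> (\<Sum>q<K. 4 * sqnorm (2*d) (F q))"
    unfolding cinner_kron_equatorial[OF A0] cinner_kron_equatorial[OF A1] sqnorm_two_blocks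
    using A0 A1 unfolding equatorial_def
    by (intro sum_mono svetlichny_block_le[OF h0 h1 c0 c1 _ _ ab]) auto
  also have "\<dots> = 4"
    using \<tau> trace_gram(2)[OF FK] by (simp add: density_def sum_distrib_left[symmetric] flip: of_real_sum)
  finally show ?thesis .
qed

section \<open>The Svetlichny bound for StLHS models\<close>

definition svetlichny :: "(nat \<Rightarrow> nat \<Rightarrow> nat \<Rightarrow> nat \<Rightarrow> nat \<Rightarrow> nat \<Rightarrow> complex) \<Rightarrow> complex" where
  "svetlichny h = (\<Sum>x\<in>{0,1}. \<Sum>y\<in>{0,1}. \<Sum>z\<in>{0,1}. \<Sum>a\<in>{0,1}. \<Sum>b\<in>{0,1}. \<Sum>c\<in>{0,1}.
      of_real ((-1) ^ (a + b + c + x*y + y*z + x*z)) * h a b c x y z)"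

lemma svetlichny_add:
  "svetlichny (\<lambda>a b c x y z. h1 a b c x y z + h2 a b c x y z) = svetlichny h1 + svetlichny h2"
  unfolding svetlichny_def by (simp add: distrib_left sum.distrib)

lemma svetlichny_scale: "svetlichny (\<lambda>a b c x y z. k * h a b c x y z) = k * svetlichny h"
  unfolding svetlichny_def sum_distrib_left by (simp only: mult.left_commute)

lemma svetlichny_sum:
  "finite L \<Longrightarrow> svetlichny (\<lambda>a b c x y z. \<Sum>l\<in>L. h l a b c x y z) = (\<Sum>l\<in>L. svetlichny (h l))"
proof (induction L rule: finite_induct)
  case empty
  then show ?case by (simp add: svetlichny_def)
next
  case (insert k L)
  then show ?case using svetlichny_add[of "h k" "\<lambda>a b c x y z. \<Sum>l\<in>L. h l a b c x y z"] by simp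
qed

lemma svetlichny_cong:
  "(\<forall>a\<in>{0,1}. \<forall>b\<in>{0,1}. \<forall>c\<in>{0,1}. \<forall>x\<in>{0,1}. \<forall>y\<in>{0,1}. \<forall>z\<in>{0,1}. h a b c x y z = h' a b c x y z)
   \<Longrightarrow> svetlichny h = svetlichny h'"
  unfolding svetlichny_def by (intro sum.cong refl) auto

text \<open>The Svetlichny expression of a correlation that factorizes into a two-party part with
  correlator \<open>F\<close> and a one-party part with correlator \<open>G\<close>.\<close>
definition svetlichny_prod :: "(nat \<Rightarrow> nat \<Rightarrow> complex) \<Rightarrow> (nat \<Rightarrow> complex) \<Rightarrow> complex" where
  "svetlichny_prod F G = (G 0 + G 1) * F 0 0 + (G 0 - G 1) * F 0 1 + (G 0 - G 1) * F 1 0 - (G 0 + G 1) * F 1 1"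

lemma svetlichny_AB_C:
  "svetlichny (\<lambda>a b c x y z. f a b x y * g c z) =
   svetlichny_prod (\<lambda>x y. f 0 0 x y - f 0 1 x y - f 1 0 x y + f 1 1 x y) (\<lambda>z. g 0 z - g 1 z)"
  unfolding svetlichny_def svetlichny_prod_def by (simp add: algebra_simps)

lemma svetlichny_A_BC:
  "svetlichny (\<lambda>a b c x y z. f a x * g b c y z) =
   svetlichny_prod (\<lambda>y z. g 0 0 y z - g 0 1 y z - g 1 0 y z + g 1 1 y z) (\<lambda>x. f 0 x - f 1 x)"
  unfolding svetlichny_def svetlichny_prod_def by (simp add: algebra_simps)

lemma svetlichny_B_AC:
  "svetlichny (\<lambda>a b c x y z. f b y * g a c x z) =
   svetlichny_prod (\<lambda>x z. g 0 0 x z - g 0 1 x z - g 1 0 x z + g 1 1 x z) (\<lambda>y. f 0 y - f 1 y)"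
  unfolding svetlichny_def svetlichny_prod_def by (simp add: algebra_simps)

lemma svetlichny_prod_le:
  assumes \<tau>: "density (2*d) \<tau>"
    and A: "equatorial (A 0)" "equatorial (A 1)"
    and D: "hermitian d (D 0)" "hermitian d (D 1)" "contraction d (D 0)" "contraction d (D 1)"
    and g: "\<bar>g 0\<bar> \<le> 1" "\<bar>g 1\<bar> \<le> 1"
  shows "Re (svetlichny_prod (\<lambda>u v. mtrace (2*d) (mmul (2*d) (kron d (A u) (D v)) \<tau>)) (\<lambda>w. of_real (g w))) \<le> 4"
proof -
  have "(g 0 + g 1)\<^sup>2 + (g 0 - g 1)\<^sup>2 \<le> 4"
    using g abs_le_square_iff[of "g 0" 1] abs_le_square_iff[of "g 1" 1]
    by (simp add: power2_eq_square algebra_simps)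
  from svetlichny_trace_le[OF \<tau> A D this] show ?thesis
    by (simp add: svetlichny_prod_def)
qed

lemma svetlichny_AB_C_le:
  assumes \<rho>: "density 4 \<rho>"
    and PC: "\<forall>z\<in>{0,1}. (\<forall>c\<in>{0,1}. 0 \<le> PC c z) \<and> PC 0 z + PC 1 z = 1"
  shows "Re (svetlichny (\<lambda>a b c x y z.
           mtrace 4 (mmul 4 (kron 2 (MA a x) (MB b y)) \<rho>) * of_real (PC c z))) \<le> 4"
proof -
  have "svetlichny (\<lambda>a b c x y z. mtrace 4 (mmul 4 (kron 2 (MA a x) (MB b y)) \<rho>) * of_real (PC c z))
      = svetlichny_prod (\<lambda>x y. mtrace (2*2) (mmul (2*2) (kron 2 (obsA x) (obsB y)) \<rho>))
          (\<lambda>z. of_real (PC 0 z - PC 1 z))"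
    unfolding svetlichny_AB_C MA_def MB_def trace_kron_proj_correlator proj_diff by simp
  also have "Re \<dots> \<le> 4"
    using \<rho> PC equatorial_obsB[THEN equatorial_hermitian] equatorial_obsB[THEN equatorial_contraction]
    by (intro svetlichny_prod_le) (auto simp: equatorial_obsA)
  finally show ?thesis .
qed

lemma svetlichny_A_BC_le:
  assumes \<rho>: "density 2 \<rho>" and \<tau>: "density (2*d) \<tau>" and N: "\<forall>z\<in>{0,1}. povm2 d (\<lambda>c. N c z)"
  shows "Re (svetlichny (\<lambda>a b c x y z.
           mtrace 2 (mmul 2 (MA a x) \<rho>) * mtrace (2*d) (mmul (2*d) (kron d (MB b y) (N c z)) \<tau>))) \<le> 4"
proof -
  define g where "g x = Re (mtrace 2 (mmul 2 (obsA x) \<rho>))" for x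
  note local_trace = density_trace_hermitian_contraction[OF \<rho>
      equatorial_obsA[THEN equatorial_hermitian] equatorial_obsA[THEN equatorial_contraction]]
  have "svetlichny (\<lambda>a b c x y z.
          mtrace 2 (mmul 2 (MA a x) \<rho>) * mtrace (2*d) (mmul (2*d) (kron d (MB b y) (N c z)) \<tau>))
      = svetlichny_prod (\<lambda>y z. mtrace (2*d) (mmul (2*d) (kron d (obsB y) (\<lambda>i j. N 0 z i j - N 1 z i j)) \<tau>))
          (\<lambda>x. of_real (g x))"
    unfolding svetlichny_A_BC MA_def MB_def trace_kron_proj_correlator trace_proj_diff g_def
    by (simp flip: local_trace(1))
  also have "Re \<dots> \<le> 4"
    using \<tau> N local_trace(2) povm2_diff_hermitian povm2_diff_contraction unfolding g_def
    by (intro svetlichny_prod_le) (auto simp: equatorial_obsB)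
  finally show ?thesis .
qed

lemma svetlichny_B_AC_le:
  assumes \<rho>: "density 2 \<rho>" and \<tau>: "density (2*d) \<tau>" and N: "\<forall>z\<in>{0,1}. povm2 d (\<lambda>c. N c z)"
  shows "Re (svetlichny (\<lambda>a b c x y z.
           mtrace 2 (mmul 2 (MB b y) \<rho>) * mtrace (2*d) (mmul (2*d) (kron d (MA a x) (N c z)) \<tau>))) \<le> 4"
proof -
  define g where "g y = Re (mtrace 2 (mmul 2 (obsB y) \<rho>))" for y
  note local_trace = density_trace_hermitian_contraction[OF \<rho>
      equatorial_obsB[THEN equatorial_hermitian] equatorial_obsB[THEN equatorial_contraction]]
  have "svetlichny (\<lambda>a b c x y z.
          mtrace 2 (mmul 2 (MB b y) \<rho>) * mtrace (2*d) (mmul (2*d) (kron d (MA a x) (N c z)) \<tau>))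
      = svetlichny_prod (\<lambda>x z. mtrace (2*d) (mmul (2*d) (kron d (obsA x) (\<lambda>i j. N 0 z i j - N 1 z i j)) \<tau>))
          (\<lambda>y. of_real (g y))"
    unfolding svetlichny_B_AC MA_def MB_def trace_kron_proj_correlator trace_proj_diff g_def
    by (simp flip: local_trace(1))
  also have "Re \<dots> \<le> 4"
    using \<tau> N local_trace(2) povm2_diff_hermitian povm2_diff_contraction unfolding g_def
    by (intro svetlichny_prod_le) (auto simp: equatorial_obsA)
  finally show ?thesis .
qed

lemma re_sum_weighted_le:
  assumes "\<forall>l\<in>L. 0 \<le> w l" "\<forall>l\<in>L. Re (X l) \<le> 4"
  shows "Re (\<Sum>l\<in>L. of_real (w l) * X l) \<le> 4 * (\<Sum>l\<in>L. w l)"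
proof -
  have "Re (\<Sum>l\<in>L. of_real (w l) * X l) = (\<Sum>l\<in>L. w l * Re (X l))"
    by simp
  also have "\<dots> \<le> (\<Sum>l\<in>L. w l * 4)"
    using assms by (intro sum_mono mult_left_mono) auto
  finally show ?thesis by (simp add: sum_distrib_right mult.commute)
qed

lemma svetlichny_stlhs_le:
  assumes "stlhs P"
  shows "Re (svetlichny (\<lambda>a b c x y z. of_real (P a b c x y z))) \<le> 4"
proof -
  obtain L :: "nat set" and r p q :: "nat \<Rightarrow> real" and rhoAB :: "nat \<Rightarrow> cmat"
    and PC :: "nat \<Rightarrow> nat \<Rightarrow> nat \<Rightarrow> real" and rhoA rhoB :: "nat \<Rightarrow> cmat"
    and dBC :: "nat \<Rightarrow> nat" and tauBC :: "nat \<Rightarrow> cmat" and NBC :: "nat \<Rightarrow> nat \<Rightarrow> nat \<Rightarrow> cmat"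
    and dAC :: "nat \<Rightarrow> nat" and tauAC :: "nat \<Rightarrow> cmat" and NAC :: "nat \<Rightarrow> nat \<Rightarrow> nat \<Rightarrow> cmat" where
    fin: "finite L" and
    weights: "\<forall>l\<in>L. r l \<ge> 0 \<and> p l \<ge> 0 \<and> q l \<ge> 0" and
    total: "(\<Sum>l\<in>L. r l + p l + q l) = 1" and
    states: "\<forall>l\<in>L.
        density 4 (rhoAB l) \<and> density 2 (rhoA l) \<and> density 2 (rhoB l) \<and>
        (\<forall>z\<in>{0,1}. (\<forall>c\<in>{0,1}. PC l c z \<ge> 0) \<and> PC l 0 z + PC l 1 z = 1) \<and>
        dBC l \<ge> 1 \<and> density (2 * dBC l) (tauBC l) \<and>
        (\<forall>z\<in>{0,1}. povm2 (dBC l) (\<lambda>c. NBC l c z)) \<and>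
        dAC l \<ge> 1 \<and> density (2 * dAC l) (tauAC l) \<and>
        (\<forall>z\<in>{0,1}. povm2 (dAC l) (\<lambda>c. NAC l c z))" and
    model: "\<forall>a\<in>{0,1}. \<forall>b\<in>{0,1}. \<forall>c\<in>{0,1}. \<forall>x\<in>{0,1}. \<forall>y\<in>{0,1}. \<forall>z\<in>{0,1}.
        of_real (P a b c x y z) =
          (\<Sum>l\<in>L. of_real (r l)
              * mtrace 4 (mmul 4 (kron 2 (MA a x) (MB b y)) (rhoAB l))
              * of_real (PC l c z))
        + (\<Sum>l\<in>L. of_real (p l)
              * mtrace 2 (mmul 2 (MA a x) (rhoA l))
              * mtrace (2 * dBC l) (mmul (2 * dBC l) (kron (dBC l) (MB b y) (NBC l c z)) (tauBC l)))
        + (\<Sum>l\<in>L. of_real (q l)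
              * mtrace 2 (mmul 2 (MB b y) (rhoB l))
              * mtrace (2 * dAC l) (mmul (2 * dAC l) (kron (dAC l) (MA a x) (NAC l c z)) (tauAC l)))"
    using assms unfolding stlhs_def by (elim exE conjE) (rule that; assumption)
  define S1 where "S1 l = svetlichny (\<lambda>a b c x y z.
      mtrace 4 (mmul 4 (kron 2 (MA a x) (MB b y)) (rhoAB l)) * of_real (PC l c z))" for l
  define S2 where "S2 l = svetlichny (\<lambda>a b c x y z. mtrace 2 (mmul 2 (MA a x) (rhoA l))
      * mtrace (2 * dBC l) (mmul (2 * dBC l) (kron (dBC l) (MB b y) (NBC l c z)) (tauBC l)))" for l
  define S3 where "S3 l = svetlichny (\<lambda>a b c x y z. mtrace 2 (mmul 2 (MB b y) (rhoB l))
      * mtrace (2 * dAC l) (mmul (2 * dAC l) (kron (dAC l) (MA a x) (NAC l c z)) (tauAC l)))" for l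
  have "svetlichny (\<lambda>a b c x y z. of_real (P a b c x y z))
      = (\<Sum>l\<in>L. of_real (r l) * S1 l) + (\<Sum>l\<in>L. of_real (p l) * S2 l) + (\<Sum>l\<in>L. of_real (q l) * S3 l)"
    unfolding svetlichny_cong[OF model] svetlichny_add svetlichny_sum[OF fin] S1_def S2_def S3_def
    by (simp only: mult.assoc svetlichny_scale)
  moreover have "Re (\<Sum>l\<in>L. of_real (r l) * S1 l) \<le> 4 * (\<Sum>l\<in>L. r l)"
    using weights states unfolding S1_def by (intro re_sum_weighted_le ballI svetlichny_AB_C_le) auto
  moreover have "Re (\<Sum>l\<in>L. of_real (p l) * S2 l) \<le> 4 * (\<Sum>l\<in>L. p l)"
    using weights states unfolding S2_def by (intro re_sum_weighted_le ballI svetlichny_A_BC_le) auto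
  moreover have "Re (\<Sum>l\<in>L. of_real (q l) * S3 l) \<le> 4 * (\<Sum>l\<in>L. q l)"
    using weights states unfolding S3_def by (intro re_sum_weighted_le ballI svetlichny_B_AC_le) auto
  moreover have "(\<Sum>l\<in>L. r l) + (\<Sum>l\<in>L. p l) + (\<Sum>l\<in>L. q l) = 1"
    using total by (simp add: sum.distrib)
  ultimately show ?thesis by simp
qed

lemma svetlichny_svf: "svetlichny (\<lambda>a b c x y z. of_real (svf V a b c x y z)) = of_real (4 * sqrt 2 * V)"
  unfolding svetlichny_def svf_def by (simp add: field_simps)

section \<open>A local model for small visibility\<close>

lemma sum_lessThan_4: "(\<Sum>i<4::nat. f i) = f 0 + f 1 + f 2 + (f 3 :: 'a :: comm_monoid_add)"
  by (simp add: numeral_eq_Suc)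

lemma sum_lessThan_5: "(\<Sum>i<5::nat. f i) = f 0 + f 1 + f 2 + f 3 + (f 4 :: 'a :: comm_monoid_add)"
  by (simp add: numeral_eq_Suc)

lemma sqrt2_complex_square: "of_real (sqrt 2) * of_real (sqrt 2) = (2 :: complex)"
  by (simp flip: of_real_mult)

definition bell :: "complex \<Rightarrow> nat \<Rightarrow> complex" where
  "bell e i = (if i = 0 then 1 / of_real (sqrt 2) else if i = 3 then e / of_real (sqrt 2) else 0)"

lemma density_bell:
  assumes "cmod e = 1"
  shows "density 4 (\<lambda>i j. bell e i * cnj (bell e j))"
proof -
  have "e * cnj e = 1" using assms complex_norm_square[of e] by simp
  then show ?thesis
    unfolding density_def mtrace_def sum_lessThan_4
    using psd_outer_product sqrt2_complex_square by (simp add: bell_def field_simps)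
qed

lemma trace_kron_proj_bell:
  assumes A: "equatorial A" and B: "equatorial B" and e: "cmod e = 1"
  shows "mtrace 4 (mmul 4 (kron 2 (proj A a) (proj B b)) (\<lambda>i j. bell e i * cnj (bell e j)))
     = of_real ((1 + (-1) ^ (a + b) * Re (A 0 1 * B 0 1 * e)) / 4)"
proof -
  define z where "z = A 0 1 * B 0 1 * e"
  have "e * cnj e = 1" using e complex_norm_square[of e] by simp
  then have "mtrace 4 (mmul 4 (kron 2 (proj A a) (proj B b)) (\<lambda>i j. bell e i * cnj (bell e j)))
      = (1/4 + 1/4 + (-1)^a * (-1)^b * (z + cnj z) / 4) / 2"
    using A B sqrt2_complex_square unfolding mtrace_def mmul_def sum_lessThan_4 z_def
    by (simp add: bell_def kron_def proj_def idm_def equatorial_def field_simps)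
  also have "\<dots> = of_real ((1 + (-1) ^ (a + b) * Re z) / 4)"
    by (simp add: complex_eq_iff power_add)
  finally show ?thesis unfolding z_def .
qed

lemma trace_kron_proj_maximally_mixed:
  assumes "equatorial A" and "equatorial B"
  shows "mtrace 4 (mmul 4 (kron 2 (proj A a) (proj B b)) (\<lambda>i j. idm i j / 4)) = 1 / 4"
  using assms unfolding mtrace_def mmul_def sum_lessThan_4
  by (simp add: kron_def proj_def idm_def equatorial_def)

definition omega :: complex where
  "omega = (1 + \<i>) / of_real (sqrt 2)"

lemma cmod_omega: "cmod omega = 1"
proof -
  have "cmod (1 + \<i>) = sqrt 2" by (simp add: cmod_def)
  then show ?thesis by (simp add: omega_def norm_divide)
qed

definition model_phase :: "nat \<Rightarrow> complex" where
  "model_phase l = (if l = 0 then cnj omega else if l = 1 then - cnj omega else if l = 2 then omega else - omega)"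

lemma cmod_model_phase: "cmod (model_phase l) = 1"
  by (simp add: model_phase_def cmod_omega)

definition model_corr :: "nat \<Rightarrow> nat \<Rightarrow> nat \<Rightarrow> real" where
  "model_corr l x y =
     (let F = (if x = 0 \<and> y = 0 then 1 else if x = 1 \<and> y = 1 then -1 else 0);
          G = (if x \<noteq> y then 1 else 0)
      in if l = 0 then F else if l = 1 then - F else if l = 2 then G else - G)"

lemma Re_correlator_model_phase:
  assumes "x \<in> {0,1}" "y \<in> {0,1}"
  shows "Re (obsA x 0 1 * obsB y 0 1 * model_phase l) = model_corr l x y"
proof -
  have "sqrt 2 / 2 * (sqrt 2 / 2) = (1 / 2 :: real)" by (simp add: field_simps)
  then show ?thesis using assms
    by (auto simp: obsA_def obsB_def sigma_x_def sigma_y_def model_phase_def omega_def model_corr_def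
        Re_divide Im_divide power2_eq_square field_simps)
qed

definition model_outcome :: "nat \<Rightarrow> nat \<Rightarrow> nat" where
  "model_outcome l z = (if l = 0 then 0 else if l = 1 then 1 else if l = 2 then z else 1 - z)"

definition model_weight :: "real \<Rightarrow> nat \<Rightarrow> real" where
  "model_weight t l = (if l < 4 then t / 4 else 1 - t)"

definition model_rhoAB :: "nat \<Rightarrow> cmat" where
  "model_rhoAB l = (if l < 4 then (\<lambda>i j. bell (model_phase l) i * cnj (bell (model_phase l) j))
                    else (\<lambda>i j. idm i j / 4))"

definition model_PC :: "nat \<Rightarrow> nat \<Rightarrow> nat \<Rightarrow> real" where
  "model_PC l c z = (if l < 4 then (if c = model_outcome l z then 1 else 0) else 1 / 2)"

lemma trace_model_rhoAB:
  assumes "x \<in> {0,1}" "y \<in> {0,1}"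
  shows "mtrace 4 (mmul 4 (kron 2 (MA a x) (MB b y)) (model_rhoAB l)) =
    of_real (if l < 4 then (1 + (-1) ^ (a + b) * model_corr l x y) / 4 else 1 / 4)"
proof (cases "l < 4")
  case True
  then have "model_rhoAB l = (\<lambda>i j. bell (model_phase l) i * cnj (bell (model_phase l) j))"
    by (simp add: model_rhoAB_def)
  then have "mtrace 4 (mmul 4 (kron 2 (MA a x) (MB b y)) (model_rhoAB l)) =
      of_real ((1 + (-1) ^ (a + b) * model_corr l x y) / 4)"
    unfolding MA_def MB_def Re_correlator_model_phase[OF assms, symmetric]
    by (simp only: trace_kron_proj_bell[OF equatorial_obsA equatorial_obsB cmod_model_phase])
  with True show ?thesis by simp
next
  case False
  then show ?thesis
    unfolding model_rhoAB_def MA_def MB_def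
    by (simp add: trace_kron_proj_maximally_mixed[OF equatorial_obsA equatorial_obsB])
qed

lemma svf_model_decomposition:
  assumes "a \<in> {0,1}" "b \<in> {0,1}" "c \<in> {0,1}" "x \<in> {0,1}" "y \<in> {0,1}" "z \<in> {0,1}"
  shows "svf V a b c x y z = (\<Sum>l<5. model_weight (sqrt 2 * V) l
     * (if l < 4 then (1 + (-1) ^ (a + b) * model_corr l x y) / 4 else 1 / 4) * model_PC l c z)"
  using assms unfolding sum_lessThan_5
  by (auto simp: svf_def model_weight_def model_PC_def model_outcome_def model_corr_def field_simps)

lemma stlhs_svf:
  assumes "0 < V" "V \<le> 1 / sqrt 2"
  shows "stlhs (svf V)"
proof -
  define t where "t = sqrt 2 * V"
  have t: "0 \<le> t" "t \<le> 1" using assms by (auto simp: t_def field_simps)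
  let ?L = "{..<5::nat}" and ?w = "model_weight t" and ?none = "\<lambda>l::nat. 0::real"
    and ?mixed = "\<lambda>l::nat. \<lambda>i j. idm i j / 2"
    and ?N = "\<lambda>(l::nat) (c::nat) (z::nat) (i::nat) (j::nat). if c = 0 then idm i j else 0"
  have model: "complex_of_real (svf V a b c x y z) =
      (\<Sum>l\<in>?L. of_real (?w l) * mtrace 4 (mmul 4 (kron 2 (MA a x) (MB b y)) (model_rhoAB l))
                * of_real (model_PC l c z))"
    if "a \<in> {0,1}" "b \<in> {0,1}" "c \<in> {0,1}" "x \<in> {0,1}" "y \<in> {0,1}" "z \<in> {0,1}" for a b c x y z
    unfolding svf_model_decomposition[OF that] trace_model_rhoAB[OF that(4,5)] t_def of_real_sum
    by (simp add: mult.assoc)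
  have weights: "\<forall>l\<in>?L. 0 \<le> ?w l" using t by (simp add: model_weight_def)
  have total: "(\<Sum>l\<in>?L. ?w l + ?none l + ?none l) = 1"
    by (simp add: sum_lessThan_5 model_weight_def)
  have rhoAB: "density 4 (model_rhoAB l)" for l
    using density_bell[OF cmod_model_phase] density_maximally_mixed[of 4]
    by (simp add: model_rhoAB_def)
  have PC: "\<forall>z\<in>{0,1}. (\<forall>c\<in>{0,1}. 0 \<le> model_PC l c z) \<and> model_PC l 0 z + model_PC l 1 z = 1" for l
    by (auto simp: model_PC_def model_outcome_def)
  have mixed: "density 2 (\<lambda>i j. idm i j / 2)"
    using density_maximally_mixed[of 2] by simp
  show ?thesis
    unfolding stlhs_def
    apply (rule exI[of _ ?L], rule exI[of _ ?w], rule exI[of _ ?none], rule exI[of _ ?none],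
        rule exI[of _ model_rhoAB], rule exI[of _ model_PC], rule exI[of _ ?mixed], rule exI[of _ ?mixed],
        rule exI[of _ "\<lambda>l. 1"], rule exI[of _ ?mixed], rule exI[of _ ?N],
        rule exI[of _ "\<lambda>l. 1"], rule exI[of _ ?mixed], rule exI[of _ ?N])
    using model weights total rhoAB PC mixed povm2_trivial by simp
qed

theorem proposition1:
  fixes V :: real
  assumes "0 < V" and "V \<le> 1"
  shows "genuine_steering_1sdi (svf V) \<longleftrightarrow> V > 1 / sqrt 2"
proof
  assume "genuine_steering_1sdi (svf V)"
  then show "V > 1 / sqrt 2"
    using stlhs_svf[OF assms(1)] unfolding genuine_steering_1sdi_def by fastforce
next
  assume V: "V > 1 / sqrt 2"
  show "genuine_steering_1sdi (svf V)"
    unfolding genuine_steering_1sdi_def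
  proof
    assume "stlhs (svf V)"
    then have "4 * sqrt 2 * V \<le> 4"
      using svetlichny_stlhs_le[of "svf V"] unfolding svetlichny_svf by simp
    with V show False by (simp add: field_simps)
  qed
qed

end
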